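(* Let $R$ be a generalized Krull domain and let $S$ be an overring of $R$ such that $R \subseteq S$ satisfies going-down. Let $\Delta$ be the set of height one primes $\mathfrak{p}$ of $R$ with $\mathfrak{p}S \neq S$. Then $S = \bigcap_{\mathfrak{p} \in \Delta} R_{\mathfrak{p}}$.
   Context: All rings are commutative with identity; an overring of a domain $R$ is a ring between $R$ and its fraction field. A ring extension $A \subseteq B$ satisfies going-down if whenever $\mathfrak{p} \subset \mathfrak{q}$ are primes of $A$ and $Q$ is a prime of $B$ with $Q \cap A = \mathfrak{q}$, there is a prime $P \subseteq Q$ of $B$ with $P \cap A = \mathfrak{p}$. A domain $R$ is a generalized Krull domain if (1) $R = \bigcap R_{\mathfrak{p}}$ over all height one primes $\mathfrak{p}$ of $R$, (2) every nonzero element of $R$ lies in only finitely many height one primes, and (3) $R_{\mathfrak{p}}$ is a valuation domain for every height one prime $\mathfrak{p}$. *)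

theory Defs
  imports Main
begin

text \<open>Domains are represented as subrings of an ambient field 'a (every domain
embeds in its fraction field). All notions are relative to the subring.\<close>

definition subring :: "'a::field set \<Rightarrow> bool" where
  "subring R \<longleftrightarrow> 0 \<in> R \<and> 1 \<in> R \<and>
     (\<forall>x\<in>R. \<forall>y\<in>R. x + y \<in> R \<and> x - y \<in> R \<and> x * y \<in> R)"

definition frac :: "'a::field set \<Rightarrow> 'a set" where
  "frac R = {a / b | a b. a \<in> R \<and> b \<in> R \<and> b \<noteq> 0}"

definition overring :: "'a::field set \<Rightarrow> 'a set \<Rightarrow> bool" where
  "overring R S \<longleftrightarrow> subring S \<and> R \<subseteq> S \<and> S \<subseteq> frac R"

definition prime_ideal :: "'a::field set \<Rightarrow> 'a set \<Rightarrow> bool" where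
  "prime_ideal R P \<longleftrightarrow> P \<subseteq> R \<and> 0 \<in> P \<and>
     (\<forall>x\<in>P. \<forall>y\<in>P. x + y \<in> P) \<and>
     (\<forall>r\<in>R. \<forall>x\<in>P. r * x \<in> P) \<and>
     P \<noteq> R \<and>
     (\<forall>a\<in>R. \<forall>b\<in>R. a * b \<in> P \<longrightarrow> a \<in> P \<or> b \<in> P)"

definition height_one :: "'a::field set \<Rightarrow> 'a set \<Rightarrow> bool" where
  "height_one R P \<longleftrightarrow> prime_ideal R P \<and> P \<noteq> {0} \<and>
     (\<forall>Q. prime_ideal R Q \<and> Q \<subseteq> P \<longrightarrow> Q = {0} \<or> Q = P)"

definition loc :: "'a::field set \<Rightarrow> 'a set \<Rightarrow> 'a set" where
  "loc R P = {a / b | a b. a \<in> R \<and> b \<in> R \<and> b \<notin> P}"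

definition valuation_domain :: "'a::field set \<Rightarrow> bool" where
  "valuation_domain V \<longleftrightarrow> subring V \<and>
     (\<forall>x\<in>frac V. x \<noteq> 0 \<longrightarrow> x \<in> V \<or> inverse x \<in> V)"

definition generalized_krull :: "'a::field set \<Rightarrow> bool" where
  "generalized_krull R \<longleftrightarrow> subring R \<and>
     R = {x \<in> frac R. \<forall>P. height_one R P \<longrightarrow> x \<in> loc R P} \<and>
     (\<forall>x\<in>R. x \<noteq> 0 \<longrightarrow> finite {P. height_one R P \<and> x \<in> P}) \<and>
     (\<forall>P. height_one R P \<longrightarrow> valuation_domain (loc R P))"

definition ext_ideal :: "'a::field set \<Rightarrow> 'a set \<Rightarrow> 'a set" where
  "ext_ideal P S = {\<Sum>i<(n::nat). p i * s i | n p s. \<forall>i<n. p i \<in> P \<and> s i \<in> S}"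

definition going_down :: "'a::field set \<Rightarrow> 'a set \<Rightarrow> bool" where
  "going_down A B \<longleftrightarrow> (\<forall>p q Q. prime_ideal A p \<and> prime_ideal A q \<and> p \<subset> q \<and>
       prime_ideal B Q \<and> Q \<inter> A = q \<longrightarrow>
       (\<exists>P. prime_ideal B P \<and> P \<subseteq> Q \<and> P \<inter> A = p))"

end

theory Submission
  imports Defs
begin

text \<open>
  For \<open>p \<in> \<Delta>\<close>, a prime of \<open>S\<close> containing \<open>pS\<close> contracts to a prime containing \<open>p\<close>, and going-down
  yields a prime \<open>P\<close> of \<open>S\<close> lying over \<open>p\<close> itself. Since \<open>R\<^sub>p\<close> is a valuation ring, an element of
  \<open>S\<close> outside \<open>R\<^sub>p\<close> has the form \<open>f/e\<close> with \<open>e \<in> p\<close>, \<open>f \<notin> p\<close>, and then \<open>f = (f/e) e \<in> P \<inter> R = p\<close>.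

  Conversely let \<open>x\<close> lie in all \<open>R\<^sub>p\<close>, \<open>p \<in> \<Delta>\<close>, but not in \<open>S\<close>, and let \<open>Q\<close> be a prime of \<open>S\<close>
  containing the conductor \<open>{s \<in> S. s x \<in> S}\<close>. Every height one prime \<open>p \<subseteq> Q \<inter> R\<close> lifts into \<open>Q\<close>
  by going-down, so \<open>p \<in> \<Delta>\<close>. In a generalized Krull domain this forces \<open>x \<in> R\<^bsub>Q \<inter> R\<^esub>\<close>: only
  finitely many height one primes \<open>p\<close> miss \<open>x\<close>, none of them inside \<open>Q \<inter> R\<close>, and for each of them
  a power of some \<open>s \<in> p - Q\<close> moves \<open>x\<close> into \<open>R\<^sub>p\<close>, because the radical of any nonzero principal
  ideal of \<open>R\<^sub>p\<close> is the maximal ideal. A denominator \<open>d \<notin> Q\<close> of \<open>x\<close> then lies in the conductor.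
\<close>

section \<open>Subrings, ideals and Krull's lemma\<close>

lemma subring_zero: "subring R \<Longrightarrow> 0 \<in> R"
  by (simp add: subring_def)

lemma subring_one: "subring R \<Longrightarrow> 1 \<in> R"
  by (simp add: subring_def)

lemma subring_add: "subring R \<Longrightarrow> x \<in> R \<Longrightarrow> y \<in> R \<Longrightarrow> x + y \<in> R"
  by (simp add: subring_def)

lemma subring_mult: "subring R \<Longrightarrow> x \<in> R \<Longrightarrow> y \<in> R \<Longrightarrow> x * y \<in> R"
  by (simp add: subring_def)

lemma subring_power: "subring R \<Longrightarrow> x \<in> R \<Longrightarrow> x ^ n \<in> R"
  by (induction n) (auto simp: subring_one subring_mult)

lemma subring_prod:
  "finite F \<Longrightarrow> subring R \<Longrightarrow> (\<And>i. i \<in> F \<Longrightarrow> f i \<in> R) \<Longrightarrow> prod f F \<in> R"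
  by (induction F rule: finite_induct) (auto simp: subring_one subring_mult)

lemma frac_mult:
  assumes R: "subring R" and d: "d \<in> R" and x: "x \<in> frac R"
  shows "d * x \<in> frac R"
proof -
  obtain a b where ab: "a \<in> R" "b \<in> R" "b \<noteq> 0" "x = a / b"
    using x by (auto simp: frac_def)
  then have "d * x = (d * a) / b" by simp
  moreover have "d * a \<in> R" using subring_mult[OF R d ab(1)] .
  ultimately show ?thesis using ab unfolding frac_def by blast
qed

definition ideal :: "'a::field set \<Rightarrow> 'a set \<Rightarrow> bool" where
  "ideal S J \<longleftrightarrow> J \<subseteq> S \<and> 0 \<in> J \<and> (\<forall>x\<in>J. \<forall>y\<in>J. x + y \<in> J) \<and> (\<forall>r\<in>S. \<forall>x\<in>J. r * x \<in> J)"

lemma ideal_carrier: "subring S \<Longrightarrow> ideal S S"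
  by (simp add: ideal_def subring_def)

lemma prime_ideal_imp_ideal: "prime_ideal S P \<Longrightarrow> ideal S P"
  by (simp add: ideal_def prime_ideal_def)

lemma ideal_sum_lessThan:
  fixes n :: nat
  shows "ideal S J \<Longrightarrow> (\<And>i. i < n \<Longrightarrow> f i \<in> J) \<Longrightarrow> (\<Sum>i<n. f i) \<in> J"
  by (induction n) (auto simp: ideal_def)

lemma ideal_eq_carrier_if_one:
  assumes J: "ideal S J" and one: "1 \<in> J"
  shows "J = S"
proof -
  have "s * 1 \<in> J" if "s \<in> S" for s
    using J one that unfolding ideal_def by blast
  then have "S \<subseteq> J" by auto
  then show ?thesis using J by (auto simp: ideal_def)
qed

lemma ideal_Union_chain:
  assumes ne: "C \<noteq> {}" and ideals: "\<And>J. J \<in> C \<Longrightarrow> ideal S J"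
    and chain: "\<forall>X\<in>C. \<forall>Y\<in>C. X \<subseteq> Y \<or> Y \<subseteq> X"
  shows "ideal S (\<Union>C)"
  unfolding ideal_def
proof (intro conjI ballI)
  show "\<Union>C \<subseteq> S" using ideals unfolding ideal_def by blast
  obtain J where "J \<in> C" using ne by blast
  then show "0 \<in> \<Union>C" using ideals[OF \<open>J \<in> C\<close>] unfolding ideal_def by blast
next
  fix x y assume "x \<in> \<Union>C" "y \<in> \<Union>C"
  then obtain X Y where XY: "X \<in> C" "Y \<in> C" "x \<in> X" "y \<in> Y" by blast
  have "\<exists>Z\<in>C. x \<in> Z \<and> y \<in> Z"
    using chain XY by (metis subsetD)
  then obtain Z where Z: "Z \<in> C" "x \<in> Z" "y \<in> Z" by blast
  then show "x + y \<in> \<Union>C" using ideals[OF Z(1)] unfolding ideal_def by blast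
next
  fix r x assume r: "r \<in> S" and "x \<in> \<Union>C"
  then obtain X where X: "X \<in> C" "x \<in> X" by blast
  then show "r * x \<in> \<Union>C" using ideals[OF X(1)] r unfolding ideal_def by blast
qed

lemma ideal_add_multiples:
  assumes S: "subring S" and M: "ideal S M" and a: "a \<in> S"
  shows "ideal S {m + a * s | m s. m \<in> M \<and> s \<in> S}" (is "ideal S ?J")
  unfolding ideal_def
proof (intro conjI ballI)
  show "?J \<subseteq> S"
    using M a S by (auto simp: ideal_def subring_add subring_mult)
  have "0 = 0 + a * 0" by simp
  then show "0 \<in> ?J" using M subring_zero[OF S] unfolding ideal_def by blast
next
  fix x y assume "x \<in> ?J" "y \<in> ?J"
  then obtain m s m' s' where "m \<in> M" "s \<in> S" "m' \<in> M" "s' \<in> S"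
    and "x = m + a * s" "y = m' + a * s'"
    by blast
  moreover from this have "x + y = (m + m') + a * (s + s')"
    by (simp add: algebra_simps)
  ultimately show "x + y \<in> ?J"
    using M S unfolding ideal_def by (blast intro: subring_add)
next
  fix r x assume r: "r \<in> S" and "x \<in> ?J"
  then obtain m s where "m \<in> M" "s \<in> S" "x = m + a * s" by blast
  moreover from this have "r * x = r * m + a * (r * s)"
    by (simp add: algebra_simps)
  ultimately show "r * x \<in> ?J"
    using M S r unfolding ideal_def by (blast intro: subring_mult)
qed

lemma maximal_ideal_prime:
  assumes S: "subring S" and M: "ideal S M" and one: "1 \<notin> M"
    and maximal: "\<And>J. ideal S J \<Longrightarrow> M \<subseteq> J \<Longrightarrow> 1 \<notin> J \<Longrightarrow> J = M"
  shows "prime_ideal S M"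
proof -
  have comaximal: "\<exists>m\<in>M. \<exists>s\<in>S. 1 = m + a * s" if a: "a \<in> S" "a \<notin> M" for a
  proof -
    let ?J = "{m + a * s | m s. m \<in> M \<and> s \<in> S}"
    have "m = m + a * 0" "a = 0 + a * 1" for m by simp_all
    then have "M \<subseteq> ?J" "a \<in> ?J"
      using M subring_zero[OF S] subring_one[OF S] unfolding ideal_def by blast+
    then have "1 \<in> ?J"
      using maximal[OF ideal_add_multiples[OF S M a(1)]] a(2) by blast
    then show ?thesis by blast
  qed
  have "a \<in> M \<or> b \<in> M" if ab: "a \<in> S" "b \<in> S" "a * b \<in> M" for a b
  proof (rule ccontr)
    assume "\<not> (a \<in> M \<or> b \<in> M)"
    then obtain m1 s1 m2 s2 where "m1 \<in> M" "s1 \<in> S" "1 = m1 + a * s1"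
      and "m2 \<in> M" "s2 \<in> S" "1 = m2 + b * s2"
      using comaximal ab by meson
    moreover from this have "1 = m1 + (a * s1 * m2 + (s1 * s2) * (a * b))"
      by (metis (no_types, lifting) distrib_left mult.assoc mult.left_commute mult.right_neutral)
    ultimately have "1 \<in> M"
      using M ab unfolding ideal_def by (metis subring_mult[OF S])
    then show False using one by simp
  qed
  then show ?thesis
    using M one subring_one[OF S] unfolding ideal_def prime_ideal_def by blast
qed

lemma ideal_subset_prime_ideal:
  assumes S: "subring S" and I: "ideal S I" and one: "1 \<notin> I"
  obtains Q where "prime_ideal S Q" "I \<subseteq> Q"
proof -
  let ?A = "{J. ideal S J \<and> I \<subseteq> J \<and> 1 \<notin> J}"
  have "\<exists>M\<in>?A. \<forall>J\<in>?A. M \<subseteq> J \<longrightarrow> J = M"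
  proof (rule subset_Zorn_nonempty)
    show "?A \<noteq> {}" using I one by blast
  next
    fix C assume ne: "C \<noteq> {}" and "subset.chain ?A C"
    then have CA: "C \<subseteq> ?A" and chain: "\<forall>X\<in>C. \<forall>Y\<in>C. X \<subseteq> Y \<or> Y \<subseteq> X"
      by (auto simp: subset_chain_def)
    have "ideal S (\<Union>C)" using ideal_Union_chain[OF ne _ chain] CA by blast
    moreover have "I \<subseteq> \<Union>C" "1 \<notin> \<Union>C" using CA ne by blast+
    ultimately show "\<Union>C \<in> ?A" by blast
  qed
  then obtain M where M: "ideal S M" "I \<subseteq> M" "1 \<notin> M"
    and maximal: "\<forall>J\<in>?A. M \<subseteq> J \<longrightarrow> J = M"
    by blast
  have "prime_ideal S M"
  proof (rule maximal_ideal_prime[OF S M(1,3)])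
    fix J assume "ideal S J" "M \<subseteq> J" "1 \<notin> J"
    then show "J = M" using maximal M(2) by blast
  qed
  then show thesis using that M(2) by blast
qed

lemma prime_ideal_zero: "prime_ideal S P \<Longrightarrow> 0 \<in> P"
  by (simp add: prime_ideal_def)

lemma prime_ideal_one_notin: "prime_ideal S P \<Longrightarrow> 1 \<notin> P"
  using ideal_eq_carrier_if_one[OF prime_ideal_imp_ideal] by (auto simp: prime_ideal_def)

lemma notin_prime_ideal_nonzero: "prime_ideal S P \<Longrightarrow> b \<notin> P \<Longrightarrow> b \<noteq> 0"
  using prime_ideal_zero by blast

lemma prime_ideal_mult_notin:
  "prime_ideal S P \<Longrightarrow> a \<in> S \<Longrightarrow> b \<in> S \<Longrightarrow> a \<notin> P \<Longrightarrow> b \<notin> P \<Longrightarrow> a * b \<notin> P"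
  by (auto simp: prime_ideal_def)

lemma prime_ideal_power_notin:
  assumes P: "prime_ideal S P" and S: "subring S" and y: "y \<in> S" "y \<notin> P"
  shows "y ^ n \<notin> P"
  by (induction n)
    (use prime_ideal_one_notin[OF P] prime_ideal_mult_notin[OF P] subring_power[OF S] y in auto)

lemma prime_ideal_prod_notin:
  "finite F \<Longrightarrow> prime_ideal S P \<Longrightarrow> subring S \<Longrightarrow> (\<And>i. i \<in> F \<Longrightarrow> f i \<in> S \<and> f i \<notin> P)
    \<Longrightarrow> prod f F \<notin> P"
proof (induction F rule: finite_induct)
  case empty then show ?case using prime_ideal_one_notin by auto
next
  case (insert x F)
  then show ?case
    using prime_ideal_mult_notin[of S P "f x" "prod f F"] subring_prod[of F S f] by auto
qed

lemma prime_ideal_contract: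
  assumes Q: "prime_ideal S Q" and R: "subring R" and RS: "R \<subseteq> S"
  shows "prime_ideal R (Q \<inter> R)"
  unfolding prime_ideal_def
proof (intro conjI ballI impI)
  show "Q \<inter> R \<subseteq> R" by blast
  show "Q \<inter> R \<noteq> R" using prime_ideal_one_notin[OF Q] subring_one[OF R] by blast
  show "0 \<in> Q \<inter> R" using prime_ideal_zero[OF Q] subring_zero[OF R] by blast
next
  fix x y assume "x \<in> Q \<inter> R" "y \<in> Q \<inter> R"
  then show "x + y \<in> Q \<inter> R" using Q subring_add[OF R] unfolding prime_ideal_def by blast
next
  fix r x assume "r \<in> R" "x \<in> Q \<inter> R"
  then show "r * x \<in> Q \<inter> R" using Q RS subring_mult[OF R] unfolding prime_ideal_def by blast
next
  fix a b assume "a \<in> R" "b \<in> R" "a * b \<in> Q \<inter> R"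
  then show "a \<in> Q \<inter> R \<or> b \<in> Q \<inter> R" using Q RS unfolding prime_ideal_def by blast
qed

lemma loc_memI: "a \<in> R \<Longrightarrow> b \<in> R \<Longrightarrow> b \<notin> P \<Longrightarrow> a / b \<in> loc R P"
  unfolding loc_def by blast

lemma loc_memE:
  assumes "y \<in> loc R P"
  obtains a b where "a \<in> R" "b \<in> R" "b \<notin> P" "y = a / b"
  using assms unfolding loc_def by blast

lemma subset_loc:
  assumes R: "subring R" and P: "prime_ideal R P"
  shows "R \<subseteq> loc R P"
proof
  fix r assume "r \<in> R"
  then have "r / 1 \<in> loc R P"
    using loc_memI subring_one[OF R] prime_ideal_one_notin[OF P] by metis
  then show "r \<in> loc R P" by simp
qed

lemma loc_mult:
  assumes R: "subring R" and P: "prime_ideal R P" and y: "y \<in> loc R P" and z: "z \<in> loc R P"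
  shows "y * z \<in> loc R P"
proof -
  obtain a b where ab: "a \<in> R" "b \<in> R" "b \<notin> P" "y = a / b" using y by (rule loc_memE)
  obtain c d where cd: "c \<in> R" "d \<in> R" "d \<notin> P" "z = c / d" using z by (rule loc_memE)
  have "y * z = (a * c) / (b * d)" using ab cd by simp
  then show ?thesis
    using loc_memI prime_ideal_mult_notin[OF P] subring_mult[OF R] ab cd by metis
qed

lemma loc_add:
  assumes R: "subring R" and P: "prime_ideal R P" and y: "y \<in> loc R P" and z: "z \<in> loc R P"
  shows "y + z \<in> loc R P"
proof -
  obtain a b where ab: "a \<in> R" "b \<in> R" "b \<notin> P" "y = a / b" using y by (rule loc_memE)
  obtain c d where cd: "c \<in> R" "d \<in> R" "d \<notin> P" "z = c / d" using z by (rule loc_memE)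
  have "b \<noteq> 0" "d \<noteq> 0" using ab cd notin_prime_ideal_nonzero[OF P] by auto
  then have "y + z = (a * d + c * b) / (b * d)" using ab cd by (simp add: add_frac_eq)
  then show ?thesis
    using loc_memI prime_ideal_mult_notin[OF P] subring_mult[OF R] subring_add[OF R] ab cd
    by metis
qed

lemma loc_power: "subring R \<Longrightarrow> prime_ideal R P \<Longrightarrow> y \<in> loc R P \<Longrightarrow> y ^ n \<in> loc R P"
  by (induction n) (use subset_loc subring_one loc_mult in auto)

lemma inverse_notin_loc:
  assumes P: "prime_ideal R P" and e: "e \<in> P" "e \<noteq> 0"
  shows "1 / e \<notin> loc R P"
proof
  assume "1 / e \<in> loc R P"
  then obtain g h where gh: "g \<in> R" "h \<in> R" "h \<notin> P" "1 / e = g / h" by (rule loc_memE)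
  then have "h = e * g"
    using notin_prime_ideal_nonzero[OF P] e by (simp add: field_simps)
  moreover have "e * g \<in> P"
    using P e gh by (auto simp: prime_ideal_def mult.commute)
  ultimately show False using gh by simp
qed

section \<open>Localizations that are valuation domains\<close>

lemma valuation_loc_ratio:
  assumes R: "subring R" and P: "prime_ideal R P" and V: "valuation_domain (loc R P)"
    and y: "y \<in> R" "y \<noteq> 0" and z: "z \<in> R" "z \<noteq> 0"
  shows "y / z \<in> loc R P \<or> z / y \<in> loc R P"
proof -
  have "y / z \<in> frac (loc R P)"
    unfolding frac_def using subset_loc[OF R P] y z by blast
  moreover have "\<forall>w\<in>frac (loc R P). w \<noteq> 0 \<longrightarrow> w \<in> loc R P \<or> inverse w \<in> loc R P"
    using V by (simp add: valuation_domain_def)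
  ultimately have "y / z \<in> loc R P \<or> inverse (y / z) \<in> loc R P"
    using y z by (metis divide_eq_0_iff)
  then show ?thesis by simp
qed

lemma valuation_notin_loc_eq_div:
  assumes R: "subring R" and P: "prime_ideal R P" and V: "valuation_domain (loc R P)"
    and x: "x \<in> frac R" and nx: "x \<notin> loc R P"
  obtains e f where "e \<in> P" "e \<noteq> 0" "f \<in> R" "f \<notin> P" "x = f / e"
proof -
  obtain a b where ab: "a \<in> R" "b \<in> R" "b \<noteq> 0" "x = a / b"
    using x by (auto simp: frac_def)
  have "a \<noteq> 0" using nx ab subset_loc[OF R P] subring_zero[OF R] by auto
  then have "b / a \<in> loc R P"
    using valuation_loc_ratio[OF R P V ab(1) _ ab(2,3)] nx ab by auto
  then obtain e f where ef: "e \<in> R" "f \<in> R" "f \<notin> P" "b / a = e / f" by (rule loc_memE)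
  have "x = f / e" using ab ef by (metis inverse_divide)
  moreover have "e \<noteq> 0" using ef \<open>a \<noteq> 0\<close> ab notin_prime_ideal_nonzero[OF P] by auto
  moreover have "e \<in> P" using loc_memI[of f R e P] ef \<open>x = f / e\<close> nx by blast
  ultimately show thesis using that ef by blast
qed

text \<open>The contraction to \<open>R\<close> of the radical of the principal ideal \<open>e R\<^sub>P\<close>.\<close>

definition loc_radical :: "'a::field set \<Rightarrow> 'a set \<Rightarrow> 'a \<Rightarrow> 'a set" where
  "loc_radical R P e = {y \<in> R. \<exists>n. y ^ n / e \<in> loc R P}"

lemma power_div_add_in_loc:
  assumes R: "subring R" and P: "prime_ideal R P"
    and zm: "z ^ m / e \<in> loc R P" and yz: "y / z \<in> loc R P" and z: "z \<noteq> 0"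
  shows "(y + z) ^ m / e \<in> loc R P"
proof -
  have "y + z = z * (1 + y / z)" using z by (simp add: field_simps)
  then have "(y + z) ^ m / e = (z ^ m / e) * (1 + y / z) ^ m"
    by (simp add: power_mult_distrib)
  moreover have "1 + y / z \<in> loc R P"
    using loc_add[OF R P _ yz] subset_loc[OF R P] subring_one[OF R] by blast
  then have "(z ^ m / e) * (1 + y / z) ^ m \<in> loc R P"
    using loc_mult[OF R P zm loc_power[OF R P]] by blast
  ultimately show ?thesis by (simp only:)
qed

lemma power_div_mult_in_loc:
  assumes R: "subring R" and P: "prime_ideal R P"
    and abn: "(a * b) ^ n / e \<in> loc R P" and ab: "a / b \<in> loc R P" and b: "b \<noteq> 0"
  shows "a ^ (2 * n) / e \<in> loc R P"
proof -
  have "a ^ (2 * n) / e = (a / b) ^ n * ((a * b) ^ n / e)"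
    using b by (simp add: power_mult_distrib power_mult field_simps power2_eq_square)
  moreover have "(a / b) ^ n * ((a * b) ^ n / e) \<in> loc R P"
    using loc_mult[OF R P loc_power[OF R P ab] abn] .
  ultimately show ?thesis by (simp only:)
qed

lemma zero_in_loc_radical: "subring R \<Longrightarrow> prime_ideal R P \<Longrightarrow> 0 \<in> loc_radical R P e"
  using subring_zero subset_loc by (fastforce simp: loc_radical_def intro!: exI[of _ "1::nat"])

lemma loc_radical_add:
  assumes R: "subring R" and P: "prime_ideal R P" and V: "valuation_domain (loc R P)"
    and y: "y \<in> loc_radical R P e" and z: "z \<in> loc_radical R P e"
  shows "y + z \<in> loc_radical R P e"
proof (cases "y = 0 \<or> z = 0")
  case True then show ?thesis using y z by auto
next
  case False
  obtain n m where yz: "y \<in> R" "z \<in> R" "y ^ n / e \<in> loc R P" "z ^ m / e \<in> loc R P"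
    using y z by (auto simp: loc_radical_def)
  then have "(y + z) ^ m / e \<in> loc R P \<or> (z + y) ^ n / e \<in> loc R P"
    using False valuation_loc_ratio[OF R P V] power_div_add_in_loc[OF R P] by metis
  then show ?thesis
    using subring_add[OF R yz(1,2)] by (auto simp: loc_radical_def add.commute)
qed

lemma loc_radical_prime:
  assumes R: "subring R" and P: "prime_ideal R P" and V: "valuation_domain (loc R P)"
    and e: "e \<in> P" "e \<noteq> 0"
  shows "prime_ideal R (loc_radical R P e)" (is "prime_ideal R ?I")
  unfolding prime_ideal_def
proof (intro conjI ballI impI)
  show "?I \<subseteq> R" by (auto simp: loc_radical_def)
  show "0 \<in> ?I" using zero_in_loc_radical[OF R P] .
  have "1 \<notin> ?I" using inverse_notin_loc[OF P e] by (simp add: loc_radical_def)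
  then show "?I \<noteq> R" using subring_one[OF R] by blast
next
  fix y z assume "y \<in> ?I" "z \<in> ?I"
  then show "y + z \<in> ?I" by (rule loc_radical_add[OF R P V])
next
  fix r y assume r: "r \<in> R" and "y \<in> ?I"
  then obtain n where y: "y \<in> R" "y ^ n / e \<in> loc R P" by (auto simp: loc_radical_def)
  have "(r * y) ^ n / e = r ^ n * (y ^ n / e)" by (simp add: power_mult_distrib)
  moreover have "r ^ n * (y ^ n / e) \<in> loc R P"
    using loc_mult[OF R P _ y(2)] subset_loc[OF R P] subring_power[OF R r] by blast
  ultimately have "(r * y) ^ n / e \<in> loc R P" by (simp only:)
  then show "r * y \<in> ?I" using subring_mult[OF R r y(1)] by (auto simp: loc_radical_def)
next
  fix a b assume a: "a \<in> R" and b: "b \<in> R" and "a * b \<in> ?I"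
  then obtain n where abn: "(a * b) ^ n / e \<in> loc R P" by (auto simp: loc_radical_def)
  show "a \<in> ?I \<or> b \<in> ?I"
  proof (cases "a = 0 \<or> b = 0")
    case True then show ?thesis using zero_in_loc_radical[OF R P] by auto
  next
    case False
    then have "a ^ (2 * n) / e \<in> loc R P \<or> b ^ (2 * n) / e \<in> loc R P"
      using valuation_loc_ratio[OF R P V a _ b] power_div_mult_in_loc[OF R P] abn
      by (metis mult.commute)
    then show ?thesis using a b by (auto simp: loc_radical_def)
  qed
qed

lemma loc_radical_subset:
  assumes R: "subring R" and P: "prime_ideal R P" and e: "e \<in> P" "e \<noteq> 0"
  shows "loc_radical R P e \<subseteq> P"
proof
  fix y assume "y \<in> loc_radical R P e"
  then obtain n where y: "y \<in> R" "y ^ n / e \<in> loc R P" by (auto simp: loc_radical_def)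
  show "y \<in> P"
  proof (rule ccontr)
    assume "y \<notin> P"
    then have yn: "y ^ n \<notin> P" "y ^ n \<noteq> 0"
      using prime_ideal_power_notin[OF P R y(1)] notin_prime_ideal_nonzero[OF P] by auto
    then have "(1 / y ^ n) * (y ^ n / e) \<in> loc R P"
      using loc_mult[OF R P _ y(2)] loc_memI subring_one[OF R] subring_power[OF R y(1)] by metis
    moreover have "(1 / y ^ n) * (y ^ n / e) = 1 / e" using yn e by (simp add: field_simps)
    ultimately show False using inverse_notin_loc[OF P e] by (simp only:)
  qed
qed

lemma height_one_power_div_in_loc:
  assumes R: "subring R" and P: "height_one R P" and V: "valuation_domain (loc R P)"
    and e: "e \<in> P" "e \<noteq> 0" and s: "s \<in> P"
  shows "\<exists>n. s ^ n / e \<in> loc R P"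
proof -
  have Pp: "prime_ideal R P" using P by (simp add: height_one_def)
  have "1 \<in> loc R P" using subset_loc[OF R Pp] subring_one[OF R] by blast
  then have "e / e \<in> loc R P" using e by simp
  then have "e \<in> loc_radical R P e"
    using e Pp by (auto simp: loc_radical_def prime_ideal_def intro!: exI[of _ "1::nat"])
  then have "loc_radical R P e = P"
    using P loc_radical_prime[OF R Pp V e] loc_radical_subset[OF R Pp e] e
    unfolding height_one_def by blast
  then show ?thesis using s by (auto simp: loc_radical_def)
qed

section \<open>Generalized Krull domains\<close>

lemma generalized_krull_memI:
  assumes gk: "generalized_krull R" and x: "x \<in> frac R"
    and loc: "\<And>P. height_one R P \<Longrightarrow> x \<in> loc R P"
  shows "x \<in> R"
proof -
  have "x \<in> {x \<in> frac R. \<forall>P. height_one R P \<longrightarrow> x \<in> loc R P}" using x loc by blast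
  then show ?thesis using gk unfolding generalized_krull_def by (simp only:)
qed

lemma height_one_multiplier_into_loc:
  assumes R: "subring R" and P: "height_one R P" and V: "valuation_domain (loc R P)"
    and q: "prime_ideal R q" and Pq: "\<not> P \<subseteq> q" and x: "x \<in> frac R"
  obtains t where "t \<in> R" "t \<notin> q" "t * x \<in> loc R P"
proof (cases "x \<in> loc R P")
  case True
  then show thesis using that subring_one[OF R] prime_ideal_one_notin[OF q] by simp
next
  case False
  have Pp: "prime_ideal R P" using P by (simp add: height_one_def)
  obtain e f where ef: "e \<in> P" "e \<noteq> 0" "f \<in> R" "f \<notin> P" "x = f / e"
    using valuation_notin_loc_eq_div[OF R Pp V x False] by blast
  obtain s where s: "s \<in> P" "s \<notin> q" using Pq by blast
  then have sR: "s \<in> R" using Pp by (auto simp: prime_ideal_def)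
  obtain n where n: "s ^ n / e \<in> loc R P"
    using height_one_power_div_in_loc[OF R P V ef(1,2) s(1)] by blast
  have "s ^ n * x = (s ^ n / e) * f" using ef by simp
  then have "s ^ n * x \<in> loc R P"
    using loc_mult[OF R Pp n] subset_loc[OF R Pp] ef(3) by auto
  then show thesis
    using that subring_power[OF R sR] prime_ideal_power_notin[OF q R sR s(2)] by blast
qed

lemma generalized_krull_finite_notin_loc:
  assumes gk: "generalized_krull R" and x: "x \<in> frac R"
  shows "finite {P. height_one R P \<and> x \<notin> loc R P}"
proof -
  obtain a b where ab: "a \<in> R" "b \<in> R" "b \<noteq> 0" "x = a / b"
    using x by (auto simp: frac_def)
  then have "{P. height_one R P \<and> x \<notin> loc R P} \<subseteq> {P. height_one R P \<and> b \<in> P}"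
    using loc_memI by blast
  moreover have "finite {P. height_one R P \<and> b \<in> P}"
    using gk ab by (simp add: generalized_krull_def)
  ultimately show ?thesis by (rule finite_subset)
qed

lemma generalized_krull_loc_prime:
  assumes gk: "generalized_krull R" and q: "prime_ideal R q" and x: "x \<in> frac R"
    and hyp: "\<And>P. height_one R P \<Longrightarrow> P \<subseteq> q \<Longrightarrow> x \<in> loc R P"
  shows "x \<in> loc R q"
proof -
  have R: "subring R" using gk by (simp add: generalized_krull_def)
  have V: "\<And>P. height_one R P \<Longrightarrow> valuation_domain (loc R P)"
    using gk by (simp add: generalized_krull_def)
  define F where "F = {P. height_one R P \<and> x \<notin> loc R P}"
  have finF: "finite F"
    unfolding F_def using generalized_krull_finite_notin_loc[OF gk x] .
  have "\<exists>t. t \<in> R \<and> t \<notin> q \<and> t * x \<in> loc R P" if "P \<in> F" for P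
    using that hyp height_one_multiplier_into_loc[OF R _ V q _ x] unfolding F_def by blast
  then obtain t where t: "\<And>P. P \<in> F \<Longrightarrow> t P \<in> R \<and> t P \<notin> q \<and> t P * x \<in> loc R P"
    by metis
  define d where "d = prod t F"
  have dR: "d \<in> R" unfolding d_def using subring_prod[OF finF R] t by blast
  have dq: "d \<notin> q" unfolding d_def using prime_ideal_prod_notin[OF finF q R] t by blast
  have "d * x \<in> loc R P" if P: "height_one R P" for P
  proof -
    have Pp: "prime_ideal R P" using P by (simp add: height_one_def)
    show ?thesis
    proof (cases "P \<in> F")
      case True
      then have "d * x = (t P * x) * prod t (F - {P})"
        unfolding d_def using finF by (simp add: prod.remove)
      moreover have "prod t (F - {P}) \<in> R"
        using subring_prod[of "F - {P}" R t] finF R t by blast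
      then have "(t P * x) * prod t (F - {P}) \<in> loc R P"
        using loc_mult[OF R Pp] subset_loc[OF R Pp] t[OF True] by blast
      ultimately show ?thesis by (simp only:)
    next
      case False
      then show ?thesis
        using P dR loc_mult[OF R Pp] subset_loc[OF R Pp] by (auto simp: F_def)
    qed
  qed
  then have "d * x \<in> R"
    using generalized_krull_memI[OF gk frac_mult[OF R dR x]] by blast
  moreover have "x = (d * x) / d" using notin_prime_ideal_nonzero[OF q dq] by simp
  ultimately show ?thesis using loc_memI[of "d * x" R d q] dR dq by simp
qed

lemma ext_ideal_memI:
  fixes p s :: "nat \<Rightarrow> 'a::field"
  assumes "y = (\<Sum>i<n. p i * s i)" "\<forall>i<n. p i \<in> P \<and> s i \<in> S"
  shows "y \<in> ext_ideal P S"
  unfolding ext_ideal_def using assms by blast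

lemma ext_ideal_memE:
  assumes "y \<in> ext_ideal P S"
  obtains n :: nat and p s where "y = (\<Sum>i<n. p i * s i)" "\<forall>i<n. p i \<in> P \<and> s i \<in> S"
  using assms unfolding ext_ideal_def by blast

lemma ext_ideal_subset:
  assumes Q: "ideal S Q" and PQ: "P \<subseteq> Q"
  shows "ext_ideal P S \<subseteq> Q"
proof
  fix y assume "y \<in> ext_ideal P S"
  then obtain n :: nat and p s where y: "y = (\<Sum>i<n. p i * s i)" and ps: "\<forall>i<n. p i \<in> P \<and> s i \<in> S"
    by (rule ext_ideal_memE)
  have "p i * s i \<in> Q" if "i < n" for i
  proof -
    have "p i \<in> Q" "s i \<in> S" using ps PQ that by auto
    then have "s i * p i \<in> Q" using Q unfolding ideal_def by blast
    then show ?thesis by (simp only: mult.commute)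
  qed
  then show "y \<in> Q" unfolding y by (rule ideal_sum_lessThan[OF Q])
qed

lemma subset_ext_ideal:
  assumes "1 \<in> S"
  shows "P \<subseteq> ext_ideal P S"
proof
  fix a assume "a \<in> P"
  then show "a \<in> ext_ideal P S"
    using assms by (intro ext_ideal_memI[where n=1 and p="\<lambda>_. a" and s="\<lambda>_. 1"]) auto
qed

lemma ideal_ext_ideal:
  assumes S: "subring S" and PS: "P \<subseteq> S"
  shows "ideal S (ext_ideal P S)"
  unfolding ideal_def
proof (intro conjI ballI)
  show "ext_ideal P S \<subseteq> S" using ext_ideal_subset[OF ideal_carrier[OF S] PS] .
  show "0 \<in> ext_ideal P S" by (rule ext_ideal_memI[where n=0]) auto
next
  fix x y assume "x \<in> ext_ideal P S" "y \<in> ext_ideal P S"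
  obtain n :: nat and p s where x: "x = (\<Sum>i<n. p i * s i)" "\<forall>i<n. p i \<in> P \<and> s i \<in> S"
    using \<open>x \<in> ext_ideal P S\<close> by (rule ext_ideal_memE)
  obtain m :: nat and p' s' where y: "y = (\<Sum>i<m. p' i * s' i)" "\<forall>i<m. p' i \<in> P \<and> s' i \<in> S"
    using \<open>y \<in> ext_ideal P S\<close> by (rule ext_ideal_memE)
  define p2 where "p2 = (\<lambda>i. if i < n then p i else p' (i - n))"
  define s2 where "s2 = (\<lambda>i. if i < n then s i else s' (i - n))"
  have split: "(\<Sum>i<n + k. g i) = (\<Sum>i<n. g i) + (\<Sum>i<k. g (n + i))" for k and g :: "nat \<Rightarrow> 'a"
    by (induction k) (auto simp: add.assoc)
  have "x + y = (\<Sum>i<n + m. p2 i * s2 i)"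
    unfolding split x(1) y(1) p2_def s2_def by simp
  moreover have "\<forall>i<n + m. p2 i \<in> P \<and> s2 i \<in> S"
    using x(2) y(2) unfolding p2_def s2_def by auto
  ultimately show "x + y \<in> ext_ideal P S" by (rule ext_ideal_memI)
next
  fix r x assume r: "r \<in> S" and "x \<in> ext_ideal P S"
  obtain n :: nat and p s where x: "x = (\<Sum>i<n. p i * s i)" "\<forall>i<n. p i \<in> P \<and> s i \<in> S"
    using \<open>x \<in> ext_ideal P S\<close> by (rule ext_ideal_memE)
  have "r * x = (\<Sum>i<n. p i * (r * s i))"
    unfolding x(1) by (simp add: sum_distrib_left algebra_simps)
  moreover have "\<forall>i<n. p i \<in> P \<and> r * s i \<in> S" using x(2) r subring_mult[OF S] by blast
  ultimately show "r * x \<in> ext_ideal P S" by (rule ext_ideal_memI)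
qed

lemma going_down_lift:
  assumes gd: "going_down R S" and R: "subring R" and RS: "R \<subseteq> S"
    and p: "prime_ideal R p" and Q: "prime_ideal S Q" and pQ: "p \<subseteq> Q"
  obtains P where "prime_ideal S P" "P \<subseteq> Q" "P \<inter> R = p"
proof (cases "p = Q \<inter> R")
  case True then show thesis using that Q by blast
next
  case False
  then have "p \<subset> Q \<inter> R" using pQ p by (auto simp: prime_ideal_def)
  then show thesis
    using that gd p prime_ideal_contract[OF Q R RS] Q unfolding going_down_def by blast
qed

section \<open>Overrings satisfying going-down\<close>

lemma overring_subset_loc_contract:
  assumes R: "subring R" and RS: "R \<subseteq> S" and SF: "S \<subseteq> frac R"
    and P: "prime_ideal S P" and V: "valuation_domain (loc R (P \<inter> R))"
  shows "S \<subseteq> loc R (P \<inter> R)"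
proof
  fix x assume x: "x \<in> S"
  show "x \<in> loc R (P \<inter> R)"
  proof (rule ccontr)
    assume "x \<notin> loc R (P \<inter> R)"
    then obtain e f where ef: "e \<in> P \<inter> R" "e \<noteq> 0" "f \<in> R" "f \<notin> P \<inter> R" "x = f / e"
      using valuation_notin_loc_eq_div[OF R prime_ideal_contract[OF P R RS] V] x SF by blast
    then have "f = x * e" by simp
    moreover have "x * e \<in> P" using P x ef(1) by (simp add: prime_ideal_def)
    ultimately show False using ef by simp
  qed
qed

lemma going_down_subset_loc:
  assumes R: "subring R" and S: "overring R S" and gd: "going_down R S"
    and p: "prime_ideal R p" and V: "valuation_domain (loc R p)" and proper: "ext_ideal p S \<noteq> S"
  shows "S \<subseteq> loc R p"
proof -
  have S': "subring S" "R \<subseteq> S" "S \<subseteq> frac R" using S by (auto simp: overring_def)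
  have pS: "p \<subseteq> S" using p S'(2) by (auto simp: prime_ideal_def)
  have "1 \<notin> ext_ideal p S"
    using proper ideal_eq_carrier_if_one[OF ideal_ext_ideal[OF S'(1) pS]] by blast
  then obtain Q where Q: "prime_ideal S Q" "ext_ideal p S \<subseteq> Q"
    using ideal_subset_prime_ideal[OF S'(1) ideal_ext_ideal[OF S'(1) pS]] by blast
  then have "p \<subseteq> Q" using subset_ext_ideal[OF subring_one[OF S'(1)]] by blast
  then obtain P where "prime_ideal S P" "P \<inter> R = p"
    using going_down_lift[OF gd R S'(2) p Q(1)] by metis
  then show ?thesis using overring_subset_loc_contract[OF R S'(2,3)] V by blast
qed

lemma conductor_ideal: "subring S \<Longrightarrow> ideal S {s \<in> S. s * x \<in> S}"
  unfolding ideal_def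
  by (auto simp: subring_zero subring_add subring_mult distrib_right mult.assoc)

lemma going_down_intersection_subset:
  assumes gk: "generalized_krull R" and S: "overring R S" and gd: "going_down R S"
    and x: "x \<in> frac R" and hyp: "\<And>P. height_one R P \<Longrightarrow> ext_ideal P S \<noteq> S \<Longrightarrow> x \<in> loc R P"
  shows "x \<in> S"
proof (rule ccontr)
  assume nS: "x \<notin> S"
  have R: "subring R" using gk by (simp add: generalized_krull_def)
  have S': "subring S" "R \<subseteq> S" using S by (auto simp: overring_def)
  let ?I = "{s \<in> S. s * x \<in> S}"
  obtain Q where Q: "prime_ideal S Q" "?I \<subseteq> Q"
    using ideal_subset_prime_ideal[OF S'(1) conductor_ideal[OF S'(1)]] nS by auto
  have "x \<in> loc R (Q \<inter> R)"
  proof (rule generalized_krull_loc_prime[OF gk prime_ideal_contract[OF Q(1) R S'(2)] x])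
    fix P assume P: "height_one R P" and PQ: "P \<subseteq> Q \<inter> R"
    obtain P' where P': "prime_ideal S P'" "P' \<inter> R = P"
      using going_down_lift[OF gd R S'(2) _ Q(1)] P PQ by (metis height_one_def le_inf_iff)
    then have "ext_ideal P S \<subseteq> P'"
      using ext_ideal_subset[OF prime_ideal_imp_ideal[OF P'(1)]] by blast
    then have "ext_ideal P S \<noteq> S"
      using prime_ideal_one_notin[OF P'(1)] subring_one[OF S'(1)] by blast
    then show "x \<in> loc R P" using hyp P by blast
  qed
  then obtain c d where cd: "c \<in> R" "d \<in> R" "d \<notin> Q \<inter> R" "x = c / d" by (rule loc_memE)
  moreover have "d \<noteq> 0"
    using notin_prime_ideal_nonzero[OF prime_ideal_contract[OF Q(1) R S'(2)] cd(3)] .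
  ultimately have "d * x = c" by simp
  then have "d \<in> ?I" using cd S'(2) by auto
  then show False using Q cd by blast
qed

theorem proposition6p3:
  fixes R S :: "'a::field set"
  assumes "generalized_krull R"
    and "overring R S"
    and "going_down R S"
  shows "S = {x \<in> frac R. \<forall>P. height_one R P \<and> ext_ideal P S \<noteq> S \<longrightarrow> x \<in> loc R P}"
proof
  have R: "subring R" and SF: "S \<subseteq> frac R"
    using assms(1,2) by (auto simp: generalized_krull_def overring_def)
  have "S \<subseteq> loc R P" if "height_one R P" "ext_ideal P S \<noteq> S" for P
    using going_down_subset_loc[OF R assms(2,3)] that assms(1)
    by (simp add: height_one_def generalized_krull_def)
  then show "S \<subseteq> {x \<in> frac R. \<forall>P. height_one R P \<and> ext_ideal P S \<noteq> S \<longrightarrow> x \<in> loc R P}"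
    using SF by blast
next
  show "{x \<in> frac R. \<forall>P. height_one R P \<and> ext_ideal P S \<noteq> S \<longrightarrow> x \<in> loc R P} \<subseteq> S"
    using going_down_intersection_subset[OF assms] by blast
qed

end
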